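(* There exists a homeomorphism $T\colon X\to X$ of a Cantor set $X$ which is transitive, not minimal, and has no periodic points, and which is conjugate to a homeomorphism $f\colon K\to K$ of a Cantor set $K\subseteq\mathbb{R}$ satisfying $f'(x)=0$ for every $x\in K$.
   Context: A Cantor set is a compact metric space that is totally disconnected and has no isolated points. $(X,T)$ is minimal if $X$ has no nonempty proper closed subset $A$ with $T(A)=A$; transitive if for all nonempty open $U,V\subseteq X$ there is $n\in\mathbb{N}$ with $T^n(U)\cap V\neq\emptyset$. A periodic point is $x$ with $T^n(x)=x$ for some $n\geq1$. Conjugacy means there is a homeomorphism $h\colon X\to K$ with $h\circ T=f\circ h$. For $K\subseteq\mathbb{R}$ perfect, $f'(x)=\lim_{y\to x,\,y\in K\setminus\{x\}}\frac{f(y)-f(x)}{y-x}$. *)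

theory Defs
  imports "HOL-Analysis.Analysis"
begin

definition totally_disconnected :: "'a::topological_space set \<Rightarrow> bool" where
  "totally_disconnected S \<longleftrightarrow> (\<forall>C. C \<subseteq> S \<and> connected C \<longrightarrow> (\<exists>a. C \<subseteq> {a}))"

definition cantor_set :: "'a::metric_space set \<Rightarrow> bool" where
  "cantor_set S \<longleftrightarrow> S \<noteq> {} \<and> compact S \<and> totally_disconnected S \<and> (\<forall>x\<in>S. x islimpt S)"

definition is_homeo_of :: "'a::topological_space set \<Rightarrow> ('a \<Rightarrow> 'a) \<Rightarrow> bool" where
  "is_homeo_of X T \<longleftrightarrow> (\<exists>g. homeomorphism X X T g)"

definition dyn_minimal :: "'a::topological_space set \<Rightarrow> ('a \<Rightarrow> 'a) \<Rightarrow> bool" where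
  "dyn_minimal X T \<longleftrightarrow>
     \<not> (\<exists>A. A \<noteq> {} \<and> A \<subset> X \<and> closedin (top_of_set X) A \<and> T ` A = A)"

definition dyn_transitive :: "'a::topological_space set \<Rightarrow> ('a \<Rightarrow> 'a) \<Rightarrow> bool" where
  "dyn_transitive X T \<longleftrightarrow>
     (\<forall>U V. openin (top_of_set X) U \<and> U \<noteq> {} \<and> openin (top_of_set X) V \<and> V \<noteq> {}
        \<longrightarrow> (\<exists>n::nat. n \<ge> 1 \<and> (T ^^ n) ` U \<inter> V \<noteq> {}))"

definition periodic_point :: "'a set \<Rightarrow> ('a \<Rightarrow> 'a) \<Rightarrow> 'a \<Rightarrow> bool" where
  "periodic_point X T x \<longleftrightarrow> x \<in> X \<and> (\<exists>n::nat. n \<ge> 1 \<and> (T ^^ n) x = x)"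

definition conjugate ::
  "'a::topological_space set \<Rightarrow> ('a \<Rightarrow> 'a) \<Rightarrow> 'b::topological_space set \<Rightarrow> ('b \<Rightarrow> 'b) \<Rightarrow> bool" where
  "conjugate X T K f \<longleftrightarrow>
     (\<exists>h h'. homeomorphism X K h h' \<and> (\<forall>x\<in>X. h (T x) = f (h x)))"

definition rel_deriv_is :: "(real \<Rightarrow> real) \<Rightarrow> real set \<Rightarrow> real \<Rightarrow> real \<Rightarrow> bool" where
  "rel_deriv_is f K x d \<longleftrightarrow> ((\<lambda>y. (f y - f x) / (y - x)) \<longlongrightarrow> d) (at x within K)"

end

theory Submission
  imports Defs "HOL-Library.Discrete_Functions"
begin

text \<open>T is the Vershik map of a Bratteli diagram with two vertices per level. The paths through
  the bottom vertex form the dyadic odometer, a proper closed invariant subset, while any cylinder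
  can be carried into any other, so T is transitive but not minimal; the rank of a long enough
  prefix increases strictly along orbits, so there are no periodic points. The path space is put
  on the line by x \<mapsto> \<Sum>n. x n * 16^-depth x n with depth x strictly increasing, an injective
  map onto a Cantor set K, and X = K with T transported to f. The depth is designed so that when
  y agrees with x on a long prefix, T y and T x first differ much deeper than y and x do, which
  is f' = 0. The conjugacy is the identity.\<close>

section \<open>Paths in a two-vertex Bratteli diagram\<close>

text \<open>Every level carries two vertices, a bottom vertex and a top vertex, and the edge from level
  n to level n+1 is recorded by a label: 0 and 1 join bottom to bottom, 2 and 3 bottom to top,
  4 and 5 top to top. A label at least 2 ends at the top vertex and a label at least 4 starts
  there. The Vershik order on the edges entering a vertex is 0 < 1 and 2 < 4 < 5 < 3.\<close>

definition is_path :: "(nat \<Rightarrow> nat) \<Rightarrow> bool" where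
  "is_path x \<longleftrightarrow> (\<forall>i. x i \<le> 5 \<and> (2 \<le> x i \<longleftrightarrow> 4 \<le> x (Suc i)))"

text \<open>The position of the prefix of length n among all paths from the root to its end vertex,
  ordered anti-lexicographically.\<close>

primrec rank :: "(nat \<Rightarrow> nat) \<Rightarrow> nat \<Rightarrow> nat" where
  "rank x 0 = 0"
| "rank x (Suc n) = (if x n = 0 \<or> x n = 2 then rank x n
     else if x n = 1 \<or> x n = 4 then 2^n + rank x n
     else if x n = 5 then 2^n + (n+1)*2^n + rank x n
     else 2^n + 2*((n+1)*2^n) + rank x n)"

definition num_paths :: "(nat \<Rightarrow> nat) \<Rightarrow> nat \<Rightarrow> nat" where
  "num_paths x n = (if 4 \<le> x n then (n+1)*2^n else 2^n)"

lemma is_pathD: "is_path x \<Longrightarrow> x i \<le> 5" "is_path x \<Longrightarrow> 2 \<le> x i \<longleftrightarrow> 4 \<le> x (Suc i)"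
  by (auto simp: is_path_def)

lemma label_cases: "(l::nat) \<le> 5 \<Longrightarrow> l = 0 \<or> l = 1 \<or> l = 2 \<or> l = 3 \<or> l = 4 \<or> l = 5"
  by auto

lemma is_path_top_persists:
  assumes "is_path x" "2 \<le> x i" "i \<le> j"
  shows "2 \<le> x j"
  using assms(3,2)
proof (induction j rule: dec_induct)
  case (step j)
  then show ?case using is_pathD(2)[OF assms(1), of j] by simp
qed

lemma rank_less_num_paths: "is_path x \<Longrightarrow> rank x n < num_paths x n"
proof (induction n)
  case 0 then show ?case by (simp add: num_paths_def)
next
  case (Suc n)
  have lab: "x n \<le> 5" "2 \<le> x n \<longleftrightarrow> 4 \<le> x (Suc n)" using is_pathD[OF Suc.prems] by auto
  have IH: "rank x n < num_paths x n" using Suc by auto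
  define P where "P = (2::nat)^n"
  have P: "2^Suc n = 2*P" unfolding P_def by simp
  from label_cases[OF lab(1)] show ?case
    using IH lab by (elim disjE) (auto simp: num_paths_def P P_def[symmetric] algebra_simps)
qed

lemma rank_prefix_cong: "(\<forall>i<n. x i = y i) \<Longrightarrow> rank x n = rank y n"
  by (induction n) auto

lemma rank_mono_Suc: "rank x n \<le> rank x (Suc n)"
  by auto

lemma rank_min_prefix: "(\<forall>i<k. y i = 0 \<or> y i = 2) \<Longrightarrow> rank y k = 0"
  by (induction k) auto

definition non_max_label :: "nat \<Rightarrow> bool" where "non_max_label l \<longleftrightarrow> l \<noteq> 1 \<and> l \<noteq> 3"
definition non_min_label :: "nat \<Rightarrow> bool" where "non_min_label l \<longleftrightarrow> l \<noteq> 0 \<and> l \<noteq> 2"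

lemma rank_max_prefix:
  "is_path x \<Longrightarrow> \<forall>i<k. \<not> non_max_label (x i) \<Longrightarrow> rank x k + 1 = num_paths x k"
proof (induction k)
  case 0 then show ?case by (simp add: num_paths_def)
next
  case (Suc k)
  have lab: "2 \<le> x k \<longleftrightarrow> 4 \<le> x (Suc k)" using is_pathD[OF Suc.prems(1)] by auto
  have xk: "x k = 1 \<or> x k = 3" using Suc.prems(2) by (auto simp: non_max_label_def)
  have IH: "rank x k + 1 = num_paths x k" using Suc by auto
  define P where "P = (2::nat)^k"
  have P: "2^Suc k = 2*P" unfolding P_def by simp
  from xk show ?case
    using IH lab by (elim disjE) (auto simp: num_paths_def P P_def[symmetric] algebra_simps)
qed

lemma rank_inj:
  "is_path x \<Longrightarrow> is_path y \<Longrightarrow> (4 \<le> x n \<longleftrightarrow> 4 \<le> y n) \<Longrightarrow> rank x n = rank y n \<Longrightarrow>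
    \<forall>i<n. x i = y i"
proof (induction n)
  case 0 then show ?case by simp
next
  case (Suc n)
  have lx: "x n \<le> 5" "2 \<le> x n \<longleftrightarrow> 4 \<le> x (Suc n)" using is_pathD[OF Suc.prems(1)] by auto
  have ly: "y n \<le> 5" "2 \<le> y n \<longleftrightarrow> 4 \<le> y (Suc n)" using is_pathD[OF Suc.prems(2)] by auto
  have bx: "rank x n < num_paths x n" by (rule rank_less_num_paths[OF Suc.prems(1)])
  have by': "rank y n < num_paths y n" by (rule rank_less_num_paths[OF Suc.prems(2)])
  have t: "2 \<le> x n \<longleftrightarrow> 2 \<le> y n" using lx ly Suc.prems(3) by simp
  define P where "P = (2::nat)^n"
  define Q where "Q = (n+1)*P"
  have eq: "rank x (Suc n) = rank y (Suc n)" by fact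
  have same_label: "x n = y n"
    using label_cases[OF lx(1)] label_cases[OF ly(1)] t bx by' eq
    by (simp add: num_paths_def P_def[symmetric] Q_def[symmetric] del: rank.simps)
       (auto simp: P_def[symmetric] Q_def[symmetric] algebra_simps)
  have "rank x n = rank y n" using eq same_label by (auto split: if_splits)
  moreover have "4 \<le> x n \<longleftrightarrow> 4 \<le> y n" using same_label by simp
  ultimately have "\<forall>i<n. x i = y i" using Suc.IH Suc.prems(1,2) by blast
  then show ?case using same_label less_Suc_eq by auto
qed

section \<open>The Vershik map\<close>

definition label_succ :: "nat \<Rightarrow> nat" where
  "label_succ l = (if l = 0 then 1 else if l = 2 then 4 else if l = 4 then 5 else if l = 5 then 3 else l)"

definition label_pred :: "nat \<Rightarrow> nat" where
  "label_pred l = (if l = 1 then 0 else if l = 4 then 2 else if l = 5 then 4 else if l = 3 then 5 else l)"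

text \<open>Replace the edge k by its successor and the prefix before it by the minimal path into
  the source of the new edge (resp. the predecessor and the maximal path).\<close>

definition vershik_at :: "(nat \<Rightarrow> nat) \<Rightarrow> nat \<Rightarrow> nat \<Rightarrow> nat" where
  "vershik_at x k = (\<lambda>i. if i < k then (if 4 \<le> label_succ (x k) \<and> Suc i = k then 2 else 0)
               else if i = k then label_succ (x k) else x i)"

definition vershik_inv_at :: "(nat \<Rightarrow> nat) \<Rightarrow> nat \<Rightarrow> nat \<Rightarrow> nat" where
  "vershik_inv_at x k = (\<lambda>i. if i < k then (if 4 \<le> label_pred (x k) \<and> Suc i = k then 3 else 1)
               else if i = k then label_pred (x k) else x i)"

text \<open>The unique maximal path (all ones) is sent to the unique minimal path (all zeros).\<close>

definition vershik :: "(nat \<Rightarrow> nat) \<Rightarrow> nat \<Rightarrow> nat" where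
  "vershik x = (if \<exists>k. non_max_label (x k) then vershik_at x (LEAST k. non_max_label (x k))
                else (\<lambda>i. 0))"

definition vershik_inv :: "(nat \<Rightarrow> nat) \<Rightarrow> nat \<Rightarrow> nat" where
  "vershik_inv x = (if \<exists>k. non_min_label (x k) then vershik_inv_at x (LEAST k. non_min_label (x k))
                    else (\<lambda>i. 1))"

lemma vershik_eq_at:
  assumes "non_max_label (x k)" "\<forall>i<k. \<not> non_max_label (x i)"
  shows "vershik x = vershik_at x k"
proof -
  have "(LEAST k. non_max_label (x k)) = k"
    by (rule Least_equality) (use assms in \<open>auto simp: not_less[symmetric]\<close>)
  then show ?thesis using assms unfolding vershik_def by auto
qed

lemma vershik_inv_eq_at:
  assumes "non_min_label (x k)" "\<forall>i<k. \<not> non_min_label (x i)"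
  shows "vershik_inv x = vershik_inv_at x k"
proof -
  have "(LEAST k. non_min_label (x k)) = k"
    by (rule Least_equality) (use assms in \<open>auto simp: not_less[symmetric]\<close>)
  then show ?thesis using assms unfolding vershik_inv_def by auto
qed

lemma first_non_max_label:
  fixes x :: "nat \<Rightarrow> nat" and j :: nat
  assumes "non_max_label (x j)"
  obtains k where "k \<le> j" "non_max_label (x k)" "\<forall>i<k. \<not> non_max_label (x i)"
  using ex_least_nat_le[of "\<lambda>k. non_max_label (x k)", OF assms] by blast

lemma max_prefix_labels:
  assumes "is_path x" "\<forall>i<k. \<not> non_max_label (x i)" "i < k"
  shows "x i = (if 4 \<le> x k \<and> Suc i = k then 3 else 1)"
proof -
  have xi: "x i = 1 \<or> x i = 3" using assms(2,3) by (auto simp: non_max_label_def)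
  have "Suc i < k \<Longrightarrow> x (Suc i) = 1 \<or> x (Suc i) = 3"
    using assms(2) by (auto simp: non_max_label_def)
  then show ?thesis using xi is_pathD(2)[OF assms(1), of i] assms(3) by (cases "Suc i = k") auto
qed

lemma min_prefix_labels:
  assumes "is_path x" "\<forall>i<k. \<not> non_min_label (x i)" "i < k"
  shows "x i = (if 4 \<le> x k \<and> Suc i = k then 2 else 0)"
proof -
  have xi: "x i = 0 \<or> x i = 2" using assms(2,3) by (auto simp: non_min_label_def)
  have "Suc i < k \<Longrightarrow> x (Suc i) = 0 \<or> x (Suc i) = 2"
    using assms(2) by (auto simp: non_min_label_def)
  then show ?thesis using xi is_pathD(2)[OF assms(1), of i] assms(3) by (cases "Suc i = k") auto
qed

lemma max_path_eq_ones:
  assumes "is_path x" "\<forall>k. \<not> non_max_label (x k)"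
  shows "x = (\<lambda>i. 1)"
proof
  fix i
  have "x i = (if 4 \<le> x (Suc i) then 3 else 1)"
    using max_prefix_labels[OF assms(1), of "Suc i" i] assms(2) by auto
  moreover have "x (Suc i) = 1 \<or> x (Suc i) = 3" using assms(2) by (auto simp: non_max_label_def)
  ultimately show "x i = 1" by auto
qed

lemma min_path_eq_zeros:
  assumes "is_path x" "\<forall>k. \<not> non_min_label (x k)"
  shows "x = (\<lambda>i. 0)"
proof
  fix i
  have "x i = (if 4 \<le> x (Suc i) then 2 else 0)"
    using min_prefix_labels[OF assms(1), of "Suc i" i] assms(2) by auto
  moreover have "x (Suc i) = 0 \<or> x (Suc i) = 2" using assms(2) by (auto simp: non_min_label_def)
  ultimately show "x i = 0" by auto
qed

lemma is_path_zeros: "is_path (\<lambda>i. 0)" and is_path_ones: "is_path (\<lambda>i. 1)"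
  by (auto simp: is_path_def)

lemma is_path_vershik_at:
  assumes x: "is_path x" and k: "non_max_label (x k)"
  shows "is_path (vershik_at x k)"
  unfolding is_path_def
proof
  fix i
  have xk: "x k = 0 \<or> x k = 2 \<or> x k = 4 \<or> x k = 5"
    using is_pathD(1)[OF x, of k] k by (auto simp: non_max_label_def)
  show "vershik_at x k i \<le> 5 \<and> (2 \<le> vershik_at x k i \<longleftrightarrow> 4 \<le> vershik_at x k (Suc i))"
    using xk is_pathD[OF x, of i] is_pathD[OF x, of k]
    by (cases "i < k"; cases "Suc i < k"; cases "i = k"; cases "Suc i = k")
       (auto simp: vershik_at_def label_succ_def)
qed

lemma is_path_vershik_inv_at:
  assumes x: "is_path x" and k: "non_min_label (x k)"
  shows "is_path (vershik_inv_at x k)"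
  unfolding is_path_def
proof
  fix i
  have xk: "x k = 1 \<or> x k = 3 \<or> x k = 4 \<or> x k = 5"
    using is_pathD(1)[OF x, of k] k by (auto simp: non_min_label_def)
  show "vershik_inv_at x k i \<le> 5 \<and> (2 \<le> vershik_inv_at x k i \<longleftrightarrow> 4 \<le> vershik_inv_at x k (Suc i))"
    using xk is_pathD[OF x, of i] is_pathD[OF x, of k]
    by (cases "i < k"; cases "Suc i < k"; cases "i = k"; cases "Suc i = k")
       (auto simp: vershik_inv_at_def label_pred_def)
qed

lemma is_path_vershik:
  assumes "is_path x"
  shows "is_path (vershik x)"
proof (cases "\<exists>k. non_max_label (x k)")
  case True
  then obtain k where "non_max_label (x k)" "\<forall>i<k. \<not> non_max_label (x i)"
    by (auto simp: exists_least_iff[where P="\<lambda>k::nat. non_max_label (x k)"])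
  then show ?thesis using vershik_eq_at is_path_vershik_at[OF assms] by metis
qed (simp add: vershik_def is_path_def)

lemma is_path_vershik_inv:
  assumes "is_path x"
  shows "is_path (vershik_inv x)"
proof (cases "\<exists>k. non_min_label (x k)")
  case True
  then obtain k where "non_min_label (x k)" "\<forall>i<k. \<not> non_min_label (x i)"
    by (auto simp: exists_least_iff[where P="\<lambda>k::nat. non_min_label (x k)"])
  then show ?thesis using vershik_inv_eq_at is_path_vershik_inv_at[OF assms] by metis
qed (simp add: vershik_inv_def is_path_def)

lemma is_path_funpow_vershik: "is_path x \<Longrightarrow> is_path ((vershik ^^ j) x)"
  by (induction j) (auto intro: is_path_vershik)

lemma vershik_inv_vershik:
  assumes x: "is_path x"
  shows "vershik_inv (vershik x) = x"
proof (cases "\<exists>k. non_max_label (x k)")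
  case True
  then obtain k where k: "non_max_label (x k)" "\<forall>i<k. \<not> non_max_label (x i)"
    by (auto simp: exists_least_iff[where P="\<lambda>k::nat. non_max_label (x k)"])
  have xk: "x k = 0 \<or> x k = 2 \<or> x k = 4 \<or> x k = 5"
    using is_pathD(1)[OF x, of k] k by (auto simp: non_max_label_def)
  have "non_min_label (vershik_at x k k)" "\<forall>i<k. \<not> non_min_label (vershik_at x k i)"
    using xk by (auto simp: vershik_at_def label_succ_def non_min_label_def)
  then have "vershik_inv (vershik_at x k) = vershik_inv_at (vershik_at x k) k"
    by (rule vershik_inv_eq_at)
  also have "\<dots> = x"
  proof
    fix i
    show "vershik_inv_at (vershik_at x k) k i = x i"
      using max_prefix_labels[OF x k(2), of i] xk
      by (auto simp: vershik_inv_at_def vershik_at_def label_succ_def label_pred_def)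
  qed
  finally show ?thesis using vershik_eq_at[OF k] by simp
next
  case False
  then show ?thesis
    using max_path_eq_ones[OF x] by (simp add: vershik_def vershik_inv_def non_min_label_def)
qed

lemma vershik_vershik_inv:
  assumes x: "is_path x"
  shows "vershik (vershik_inv x) = x"
proof (cases "\<exists>k. non_min_label (x k)")
  case True
  then obtain k where k: "non_min_label (x k)" "\<forall>i<k. \<not> non_min_label (x i)"
    by (auto simp: exists_least_iff[where P="\<lambda>k::nat. non_min_label (x k)"])
  have xk: "x k = 1 \<or> x k = 3 \<or> x k = 4 \<or> x k = 5"
    using is_pathD(1)[OF x, of k] k by (auto simp: non_min_label_def)
  have "non_max_label (vershik_inv_at x k k)" "\<forall>i<k. \<not> non_max_label (vershik_inv_at x k i)"
    using xk by (auto simp: vershik_inv_at_def label_pred_def non_max_label_def)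
  then have "vershik (vershik_inv_at x k) = vershik_at (vershik_inv_at x k) k"
    by (rule vershik_eq_at)
  also have "\<dots> = x"
  proof
    fix i
    show "vershik_at (vershik_inv_at x k) k i = x i"
      using min_prefix_labels[OF x k(2), of i] xk
      by (auto simp: vershik_inv_at_def vershik_at_def label_succ_def label_pred_def)
  qed
  finally show ?thesis using vershik_inv_eq_at[OF k] by simp
next
  case False
  then show ?thesis
    using min_path_eq_zeros[OF x] by (simp add: vershik_def vershik_inv_def non_max_label_def)
qed

section \<open>Dynamics of the Vershik map\<close>

lemma vershik_at_beyond: "k < i \<Longrightarrow> vershik_at x k i = x i"
  by (simp add: vershik_at_def)

lemma rank_vershik_at:
  assumes x: "is_path x" and k: "non_max_label (x k)" "\<forall>i<k. \<not> non_max_label (x i)" and "k < n"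
  shows "rank (vershik_at x k) n = rank x n + 1"
  using Suc_leI[OF \<open>k < n\<close>]
proof (induction n rule: dec_induct)
  case base
  have xk: "x k = 0 \<or> x k = 2 \<or> x k = 4 \<or> x k = 5"
    using is_pathD(1)[OF x, of k] k by (auto simp: non_max_label_def)
  have "rank x k + 1 = num_paths x k" by (rule rank_max_prefix[OF x k(2)])
  moreover have "rank (vershik_at x k) k = 0" by (rule rank_min_prefix) (auto simp: vershik_at_def)
  moreover have "vershik_at x k k = label_succ (x k)" by (simp add: vershik_at_def)
  moreover define P where "P = (2::nat)^k"
  ultimately show ?case
    using xk by (auto simp: num_paths_def label_succ_def P_def[symmetric] algebra_simps)
next
  case (step n)
  then have "vershik_at x k n = x n" by (simp add: vershik_at_beyond)
  then show ?case using step.IH by simp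
qed

lemma rank_vershik:
  assumes x: "is_path x" and "non_max_label (x j)" "j < n"
  shows "rank (vershik x) n = rank x n + 1" and "\<forall>i\<ge>n. vershik x i = x i"
proof -
  obtain k where k: "k \<le> j" "non_max_label (x k)" "\<forall>i<k. \<not> non_max_label (x i)"
    using first_non_max_label[of x j] assms(2) by blast
  have "vershik x = vershik_at x k" by (rule vershik_eq_at[OF k(2,3)])
  then show "rank (vershik x) n = rank x n + 1" "\<forall>i\<ge>n. vershik x i = x i"
    using rank_vershik_at[OF x k(2,3)] vershik_at_beyond[of k] k(1) assms(3) by auto
qed

lemma rank_Suc_less_num_paths:
  assumes x: "is_path x" and "non_max_label (x j)" "j < n"
  shows "rank x n + 1 < num_paths x n"
proof -
  have "num_paths (vershik x) n = num_paths x n"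
    using rank_vershik(2)[OF assms] by (simp add: num_paths_def)
  then show ?thesis
    using rank_vershik(1)[OF assms] rank_less_num_paths[OF is_path_vershik[OF x], of n] by simp
qed

lemma funpow_vershik_rank_diff:
  assumes "is_path u" "is_path u'" "\<forall>i\<ge>L. u i = u' i" "rank u L \<le> rank u' L"
  shows "(vershik ^^ (rank u' L - rank u L)) u = u'"
  using assms
proof (induction "rank u' L - rank u L" arbitrary: u)
  case 0
  then have "\<forall>i<L. u i = u' i" using rank_inj[OF 0(2) 0(3), of L] by auto
  then have "u = u'" using 0(4) by (metis not_le ext)
  then show ?case by simp
next
  case (Suc d)
  have lt: "rank u L < rank u' L" using Suc(2) by simp
  have "num_paths u' L = num_paths u L" using Suc(5) by (simp add: num_paths_def)
  then have "rank u L + 1 \<noteq> num_paths u L"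
    using lt rank_less_num_paths[OF Suc(4), of L] by simp
  then obtain j where j: "j < L" "non_max_label (u j)"
    using rank_max_prefix[OF Suc(3), of L] by blast
  note step = rank_vershik[OF Suc(3) j(2,1)]
  have "d = rank u' L - rank (vershik u) L" using Suc(2) step(1) by simp
  then have "(vershik ^^ d) (vershik u) = u'"
    using Suc(1)[of "vershik u"] is_path_vershik[OF Suc(3)] Suc(4,5) step lt by auto
  moreover have "rank u' L - rank u L = Suc d" using Suc(2) by simp
  ultimately show ?case by (simp add: funpow_Suc_right del: funpow.simps)
qed

text \<open>Paths staying at the bottom vertex form the dyadic odometer.\<close>

definition bottom_path :: "(nat \<Rightarrow> nat) \<Rightarrow> bool" where
  "bottom_path x \<longleftrightarrow> (\<forall>i. x i \<le> 1)"

lemma bottom_path_vershik: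
  assumes x: "is_path x" and b: "bottom_path x"
  shows "bottom_path (vershik x)"
proof (cases "\<exists>k. non_max_label (x k)")
  case True
  then obtain k where k: "non_max_label (x k)" "\<forall>i<k. \<not> non_max_label (x i)"
    by (auto simp: exists_least_iff[where P="\<lambda>k::nat. non_max_label (x k)"])
  have "x k = 0" using k b by (auto simp: bottom_path_def non_max_label_def le_Suc_eq)
  then show ?thesis
    using vershik_eq_at[OF k] b by (auto simp: bottom_path_def vershik_at_def label_succ_def)
qed (simp add: vershik_def bottom_path_def)

lemma bottom_path_vershik_inv:
  assumes x: "is_path x" and b: "bottom_path x"
  shows "bottom_path (vershik_inv x)"
proof (cases "\<exists>k. non_min_label (x k)")
  case True
  then obtain k where k: "non_min_label (x k)" "\<forall>i<k. \<not> non_min_label (x i)"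
    by (auto simp: exists_least_iff[where P="\<lambda>k::nat. non_min_label (x k)"])
  have "x k \<le> 1" using b by (simp add: bottom_path_def)
  then have "x k = 1" using k(1) by (simp add: non_min_label_def)
  then show ?thesis
    using vershik_inv_eq_at[OF k] b by (auto simp: bottom_path_def vershik_inv_at_def label_pred_def)
qed (simp add: vershik_inv_def bottom_path_def)

lemma num_paths_bottom: "bottom_path x \<Longrightarrow> num_paths x n = 2^n"
  by (auto simp: bottom_path_def num_paths_def dest: spec[of _ n])

lemma rank_less_if_bottom: "\<forall>i<n. x i \<le> 1 \<Longrightarrow> rank x n < 2^n"
proof (induction n)
  case (Suc n)
  then have "rank x n < 2^n" "x n \<le> 1" by auto
  then show ?case by (auto simp: le_Suc_eq)
qed simp

lemma rank_vershik_bottom: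
  assumes x: "is_path x" and b: "bottom_path x"
  shows "rank (vershik x) n = (rank x n + 1) mod 2^n"
proof (cases "\<exists>j<n. non_max_label (x j)")
  case True
  then obtain j where j: "j < n" "non_max_label (x j)" by blast
  show ?thesis
    using rank_vershik(1)[OF x j(2,1)] rank_Suc_less_num_paths[OF x j(2,1)] num_paths_bottom[OF b]
    by simp
next
  case False
  have "rank x n + 1 = 2^n"
    using rank_max_prefix[OF x, of n] False num_paths_bottom[OF b] by auto
  moreover have "\<forall>i<n. vershik x i = 0"
  proof (cases "\<exists>k. non_max_label (x k)")
    case True
    then obtain k where k: "non_max_label (x k)" "\<forall>i<k. \<not> non_max_label (x i)"
      by (auto simp: exists_least_iff[where P="\<lambda>k::nat. non_max_label (x k)"])
    have "x k = 0" using k b by (auto simp: bottom_path_def non_max_label_def le_Suc_eq)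
    moreover have "n \<le> k" using False k(1) not_less by blast
    ultimately show ?thesis using vershik_eq_at[OF k] by (auto simp: vershik_at_def label_succ_def)
  qed (simp add: vershik_def)
  then have "rank (vershik x) n = 0" using rank_min_prefix[of n "vershik x"] by auto
  ultimately show ?thesis by simp
qed

lemma bottom_path_aperiodic:
  assumes x: "is_path x" and b: "bottom_path x" and "0 < K"
  shows "(vershik ^^ K) x \<noteq> x"
proof
  assume periodic: "(vershik ^^ K) x = x"
  have rx: "rank x K < 2^K" using rank_less_if_bottom b by (simp add: bottom_path_def)
  have "rank ((vershik ^^ j) x) K = (rank x K + j) mod 2^K" for j
  proof (induction j)
    case (Suc j)
    have "bottom_path ((vershik ^^ j) x)"
      by (induction j) (use x b bottom_path_vershik is_path_funpow_vershik in auto)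
    then show ?case
      using rank_vershik_bottom[OF is_path_funpow_vershik[OF x]] Suc by (simp add: mod_Suc_eq)
  qed (use rx in simp)
  then have "(rank x K + K) mod 2^K = rank x K" using periodic by metis
  moreover have "(rank x K + K) mod 2^K \<noteq> rank x K"
  proof (cases "rank x K + K < 2^K")
    case False
    have "K < 2^K" by (rule less_exp)
    moreover have "rank x K + K - 2^K < 2^K" using rx \<open>K < 2^K\<close> by linarith
    ultimately have "(rank x K + K) mod 2^K = rank x K + K - 2^K"
      using False by (simp add: le_mod_geq)
    then show ?thesis using \<open>K < 2^K\<close> False by linarith
  qed (use \<open>0 < K\<close> in simp)
  ultimately show False by contradiction
qed

text \<open>Once a path has reached the top vertex it has a non-maximal edge (label 4 or 5) just
  above every point it visits there, so the rank at a fixed high level increases at every step.\<close>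

lemma funpow_vershik_from_top:
  assumes x: "is_path x" and "2 \<le> x m" "j \<le> K"
  shows "rank ((vershik ^^ j) x) (m + K + 2) = rank x (m + K + 2) + j
    \<and> (\<exists>i\<le>m + j. 2 \<le> (vershik ^^ j) x i)"
  using assms(3)
proof (induction j)
  case 0 then show ?case using assms(2) by auto
next
  case (Suc j)
  define z where "z = (vershik ^^ j) x"
  obtain i0 where i0: "i0 \<le> m + j" "2 \<le> z i0"
    and rz: "rank z (m + K + 2) = rank x (m + K + 2) + j"
    using Suc by (auto simp: z_def)
  have z: "is_path z" unfolding z_def by (rule is_path_funpow_vershik[OF x])
  have z1: "4 \<le> z (Suc i0)" using is_pathD(2)[OF z, of i0] i0(2) by simp
  then have z2: "4 \<le> z (Suc (Suc i0))" using is_pathD(2)[OF z, of "Suc i0"] by simp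
  have nm: "non_max_label (z (Suc i0))" using z1 by (simp add: non_max_label_def)
  have "vershik z (Suc (Suc i0)) = z (Suc (Suc i0))"
    using rank_vershik(2)[OF z nm, of "Suc (Suc i0)"] by simp
  then have "2 \<le> vershik z (Suc i0)"
    using z2 is_pathD(2)[OF is_path_vershik[OF z], of "Suc i0"] by simp
  moreover have "rank (vershik z) (m + K + 2) = rank z (m + K + 2) + 1"
    by (rule rank_vershik(1)[OF z nm]) (use i0 Suc.prems in simp)
  ultimately show ?case using rz i0(1) by (auto simp: z_def intro!: exI[of _ "Suc i0"])
qed

lemma vershik_aperiodic:
  assumes x: "is_path x" and "0 < K"
  shows "(vershik ^^ K) x \<noteq> x"
proof (cases "bottom_path x")
  case True
  then show ?thesis using bottom_path_aperiodic[OF x _ assms(2)] by blast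
next
  case False
  then obtain m where "\<not> x m \<le> 1" by (auto simp: bottom_path_def)
  then have "2 \<le> x m" by simp
  from funpow_vershik_from_top[OF x this order_refl]
  have "rank ((vershik ^^ K) x) (m + K + 2) = rank x (m + K + 2) + K" by simp
  then show ?thesis using assms(2) by (auto simp del: rank.simps)
qed

section \<open>The depth function\<close>

text \<open>A path x will be placed at the real number whose n-th digit x n sits at depth
  depth x n in base 16. Along the bottom vertex level k contributes weight k (rank x k), a number
  in 1..2^k that grows by one under the Vershik map except when it wraps around. The shift
  2^(floor_log k - 1) confines the wrap-arounds of a given path to boundedly many levels, and
  makes the maximal path lighter than the minimal path by about half the level. At the top
  vertex the depth 2^(n+1) + n * rank x n exceeds all bottom depths at level n and gains n
  with every step of the map.\<close>

definition weight_shift :: "nat \<Rightarrow> nat" where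
  "weight_shift k = floor_log k - 1"

definition weight :: "nat \<Rightarrow> nat \<Rightarrow> nat" where
  "weight k r = 1 + (r + 2^weight_shift k) mod 2^k"

definition weight_sum :: "(nat \<Rightarrow> nat) \<Rightarrow> nat \<Rightarrow> nat" where
  "weight_sum x n = (\<Sum>k\<in>{1..n}. weight k (rank x k))"

definition depth :: "(nat \<Rightarrow> nat) \<Rightarrow> nat \<Rightarrow> nat" where
  "depth x n = (if n = 0 then 0
     else if 2 \<le> x (n-1) then 2^(n+1) + n * rank x n
     else weight_sum x n)"

definition depth_bound :: "nat \<Rightarrow> nat" where
  "depth_bound n = 2^(n+1) + n*((n+1)*2^n)"

lemma weight_shift_less: "1 \<le> k \<Longrightarrow> weight_shift k < k"
proof -
  assume "1 \<le> k"
  then have "2 ^ floor_log k \<le> k" using floor_log_exp2_le by auto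
  moreover have "floor_log k < 2 ^ floor_log k" by (rule less_exp)
  ultimately show ?thesis unfolding weight_shift_def by linarith
qed

lemma weight_le: "weight k r \<le> 2^k"
proof -
  have "(r + 2^weight_shift k) mod 2^k < 2^k" by simp
  then show ?thesis unfolding weight_def by linarith
qed

lemma weight_sum_Suc: "weight_sum x (Suc n) = weight_sum x n + weight (Suc n) (rank x (Suc n))"
  unfolding weight_sum_def by (simp add: atLeastAtMostSuc_conv add.commute)

lemma weight_sum_bound: "weight_sum x n + 2 \<le> 2^(n+1)"
proof (induction n)
  case (Suc n)
  then show ?case
    using weight_le[of "Suc n" "rank x (Suc n)"] by (simp add: weight_sum_Suc del: rank.simps)
qed (simp add: weight_sum_def)

lemma depth_prefix_cong: "\<forall>i<n. x i = y i \<Longrightarrow> depth x n = depth y n"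
proof -
  assume "\<forall>i<n. x i = y i"
  moreover have "weight_sum x n = weight_sum y n"
    unfolding weight_sum_def using calculation
    by (intro sum.cong) (auto intro!: arg_cong[where f="weight _"] rank_prefix_cong)
  ultimately show ?thesis using rank_prefix_cong[of n x y] by (cases n) (auto simp: depth_def)
qed

lemma depth_Suc_gt:
  assumes x: "is_path x"
  shows "depth x n < depth x (Suc n)"
proof (cases n)
  case 0
  then show ?thesis by (simp add: depth_def weight_sum_def weight_def)
next
  case (Suc m)
  note top_step = is_pathD(2)[OF x, of m]
  have rank_le: "Suc m * rank x (Suc m) \<le> Suc (Suc m) * rank x (Suc (Suc m))"
    using rank_mono_Suc by (intro mult_mono) auto
  consider "2 \<le> x m" | "\<not> 2 \<le> x m" "2 \<le> x (Suc m)" | "\<not> 2 \<le> x m" "\<not> 2 \<le> x (Suc m)"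
    by blast
  then show ?thesis
  proof cases
    case 1
    then have "depth x (Suc m) = 2^Suc (Suc m) + Suc m * rank x (Suc m)"
      "depth x (Suc (Suc m)) = 2^Suc (Suc (Suc m)) + Suc (Suc m) * rank x (Suc (Suc m))"
      using top_step by (simp_all add: depth_def del: rank.simps)
    moreover have "(2::nat)^Suc (Suc m) < 2^Suc (Suc (Suc m))" by simp
    ultimately show ?thesis using rank_le unfolding Suc by linarith
  next
    case 2
    then show ?thesis using weight_sum_bound[of x "Suc m"] Suc by (simp add: depth_def del: rank.simps)
  next
    case 3
    then show ?thesis using Suc by (simp add: depth_def weight_sum_Suc weight_def del: rank.simps)
  qed
qed

lemma depth_add_le:
  assumes x: "is_path x" and "m \<le> n"
  shows "depth x m + (n - m) \<le> depth x n"
  using assms(2)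
proof (induction n rule: dec_induct)
  case (step n)
  then show ?case using depth_Suc_gt[OF x, of n] by simp
qed simp

lemma depth_le_depth_bound:
  assumes x: "is_path x"
  shows "depth x n \<le> depth_bound n"
proof (cases "n \<noteq> 0 \<and> 2 \<le> x (n-1)")
  case True
  then have "4 \<le> x n" using is_pathD(2)[OF x, of "n-1"] by simp
  then have "rank x n < (n + 1) * 2^n"
    using rank_less_num_paths[OF x, of n] by (simp add: num_paths_def)
  then have "n * rank x n \<le> n * ((n + 1) * 2^n)" by simp
  then show ?thesis using True by (simp add: depth_def depth_bound_def)
next
  case False
  then show ?thesis
    using weight_sum_bound[of x n] by (auto simp: depth_def depth_bound_def)
qed

lemma depth_bound_mono: "m \<le> n \<Longrightarrow> depth_bound m \<le> depth_bound n"
  unfolding depth_bound_def by (intro add_mono mult_mono power_increasing) auto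

section \<open>Depth gain under the Vershik map\<close>

lemma rank_bottom_mod:
  assumes "\<forall>i<k. x i \<le> 1" "j \<le> k"
  shows "rank x k mod 2^j = rank x j"
  using assms
proof (induction k)
  case (Suc k)
  show ?case
  proof (cases "j = Suc k")
    case True
    then show ?thesis using rank_less_if_bottom[OF Suc.prems(1)] by simp
  next
    case False
    then have jk: "j \<le> k" using Suc.prems(2) by simp
    have "(2::nat)^k = 2^j * 2^(k-j)" using jk by (simp flip: power_add)
    then have "(2^k + rank x k) mod 2^j = rank x k mod 2^j" by simp
    moreover have "x k \<le> 1" using Suc.prems(1) by simp
    ultimately show ?thesis using Suc.IH jk Suc.prems(1) by (auto simp: le_Suc_eq)
  qed
qed simp

lemma pow_minus_one_mod_pow:
  fixes b :: nat
  assumes "0 < b" "j \<le> k"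
  shows "(b^k - 1) mod b^j = b^j - 1"
proof -
  have e: "b^k = b^j * b^(k-j)" using assms(2) by (simp flip: power_add)
  have "1 \<le> b^(k-j)" "1 \<le> b^j" using assms(1) by simp_all
  then have "b^k - 1 = (b^j - 1) + b^j * (b^(k-j) - 1)"
    using e by (simp add: algebra_simps diff_mult_distrib2)
  then have "(b^k - 1) mod b^j = (b^j - 1) mod b^j" by simp
  also have "\<dots> = b^j - 1" using \<open>1 \<le> b^j\<close> by simp
  finally show ?thesis .
qed

lemma weight_succ_ge:
  "int (weight k ((r + 1) mod 2^k)) \<ge>
     int (weight k r) + 1 - (if (r + 2^weight_shift k) mod 2^k = 2^k - 1 then 2^k else 0)"
proof -
  define q where "q = (r + 2^weight_shift k) mod 2^k"
  have q: "q < 2^k" unfolding q_def by simp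
  have "((r + 1) mod 2^k + 2^weight_shift k) mod 2^k = (q + 1) mod 2^k"
    unfolding q_def by (simp add: mod_simps ac_simps)
  then show ?thesis
    using q by (cases "q + 1 < 2^k") (auto simp: weight_def q_def[symmetric])
qed

text \<open>Along the bottom vertex the rank is the binary number with digits x 0, x 1, \<dots>, so
  wrap_level x j says that j is the position of the first zero of x.\<close>

definition wrap_level :: "(nat \<Rightarrow> nat) \<Rightarrow> nat \<Rightarrow> bool" where
  "wrap_level x j \<longleftrightarrow> (\<forall>i\<le>j. x i \<le> 1) \<and> rank x (j+1) = 2^j - 1"

definition wrap_bound :: "(nat \<Rightarrow> nat) \<Rightarrow> nat" where
  "wrap_bound x = (if \<exists>j. wrap_level x j then 2^((THE j. wrap_level x j) + 2) else 0)"

lemma wrap_level_unique: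
  assumes "wrap_level x j" "wrap_level x j'"
  shows "j = j'"
proof (rule ccontr)
  assume "j \<noteq> j'"
  then obtain a b where ab: "a < b" "wrap_level x a" "wrap_level x b"
    using assms by (metis linorder_neqE_nat)
  have "rank x (b+1) mod 2^(a+1) = rank x (a+1)"
    using ab(3) \<open>a < b\<close> by (intro rank_bottom_mod) (auto simp: wrap_level_def)
  moreover have "((2::nat)^b - 1) mod 2^(a+1) = 2^(a+1) - 1"
    using \<open>a < b\<close> by (intro pow_minus_one_mod_pow) auto
  ultimately have "(2::nat)^(a+1) - 1 = 2^a - 1" using ab(2,3) by (simp add: wrap_level_def)
  moreover have "(2::nat)^a < 2^(a+1)" "(1::nat) \<le> 2^a" by simp_all
  ultimately show False by linarith
qed

lemma wrap_level_weight_shift: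
  assumes bottom: "\<forall>i<k. x i \<le> 1" and "1 \<le> k"
    and wraps: "(rank x k + 2^weight_shift k) mod 2^k = 2^k - 1"
  shows "wrap_level x (weight_shift k)"
proof -
  define c where "c = weight_shift k"
  have ck: "c + 1 \<le> k" using weight_shift_less[OF \<open>1 \<le> k\<close>] by (simp add: c_def)
  have "(2::nat)^(c+1) dvd 2^k" by (rule le_imp_power_dvd) (use ck in simp)
  then have "(rank x k + 2^c) mod 2^(c+1) = ((rank x k + 2^c) mod 2^k) mod 2^(c+1)"
    by (simp add: mod_mod_cancel)
  also have "\<dots> = 2^(c+1) - 1"
    using wraps pow_minus_one_mod_pow[OF _ ck, of 2] by (simp add: c_def)
  finally have "(rank x k + 2^c) mod 2^(c+1) = 2^(c+1) - 1" .
  moreover have "rank x k mod 2^(c+1) = rank x (c+1)" by (rule rank_bottom_mod[OF bottom ck])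
  ultimately have "(rank x (c+1) + 2^c) mod 2^(c+1) = 2^(c+1) - 1"
    by (metis mod_add_left_eq)
  moreover have "rank x (c+1) < 2^(c+1)"
    using rank_less_if_bottom[of "c+1" x] bottom ck by simp
  moreover define S P where "S = rank x (c+1)" and "P = (2::nat)^c"
  ultimately have "(S + P) mod (2*P) = 2*P - 1" "S < 2*P" by simp_all
  then have "S = P - 1"
    by (cases "S + P < 2*P") (auto simp: le_mod_geq)
  then show ?thesis using bottom ck by (auto simp: wrap_level_def c_def S_def P_def)
qed

lemma less_pow_weight_shift: "k < 2^(weight_shift k + 2)"
proof -
  have "k < 2 * 2^floor_log k" by (rule floor_log_exp2_gt)
  moreover have "(2::nat)^floor_log k \<le> 2^(weight_shift k + 1)"
    by (intro power_increasing) (auto simp: weight_shift_def)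
  ultimately show ?thesis by simp
qed

lemma wrapping_level_less_wrap_bound:
  assumes "\<forall>i<k. x i \<le> 1" "1 \<le> k" "(rank x k + 2^weight_shift k) mod 2^k = 2^k - 1"
  shows "k < wrap_bound x"
proof -
  have w: "wrap_level x (weight_shift k)" by (rule wrap_level_weight_shift[OF assms])
  then have "(THE j. wrap_level x j) = weight_shift k"
    using wrap_level_unique by blast
  then show ?thesis using w less_pow_weight_shift[of k] by (auto simp: wrap_bound_def)
qed

lemma sum_increments_ge:
  fixes c :: "nat \<Rightarrow> int"
  assumes "\<forall>k\<in>{1..n}. c k \<ge> 1 - (if k < B then 2^k else 0)"
  shows "(\<Sum>k\<in>{1..n}. c k) \<ge> int n - 2 * 2^B"
proof -
  have "(\<Sum>k\<in>{1..n}. c k) \<ge> int n - 2 * 2^(min n B)"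
    using assms
  proof (induction n)
    case (Suc n)
    have IH: "(\<Sum>k\<in>{1..n}. c k) \<ge> int n - 2 * 2^(min n B)" using Suc by auto
    have cs: "c (Suc n) \<ge> 1 - (if Suc n < B then 2^Suc n else 0)" using Suc.prems by auto
    have s: "(\<Sum>k\<in>{1..Suc n}. c k) = (\<Sum>k\<in>{1..n}. c k) + c (Suc n)"
      by (simp add: atLeastAtMostSuc_conv)
    show ?case
    proof (cases "Suc n < B")
      case True
      then show ?thesis using IH cs s by (simp add: min_def)
    next
      case False
      have "(2::int)^(min n B) \<le> 2^B" by (intro power_increasing) auto
      moreover have m: "min (Suc n) B = B" and "c (Suc n) \<ge> 1" using False cs by auto
      ultimately show ?thesis using IH unfolding m s of_nat_Suc by linarith
    qed
  qed simp
  moreover have "(2::int)^(min n B) \<le> 2^B" by (intro power_increasing) auto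
  ultimately show ?thesis by linarith
qed

lemma num_paths_bottom_prefix:
  assumes x: "is_path x" and bottom: "\<forall>i<n. x i \<le> 1" and "k \<le> n"
  shows "num_paths x k = 2^k"
proof (cases "k < n")
  case True
  then show ?thesis using bottom by (auto simp: num_paths_def dest: spec[of _ k])
next
  case False
  then have "k = n" using \<open>k \<le> n\<close> by simp
  moreover have "n = 0 \<or> \<not> 4 \<le> x n"
    using is_pathD(2)[OF x, of "n-1"] bottom by (cases n) auto
  ultimately show ?thesis by (auto simp: num_paths_def)
qed

lemma rank_vershik_bottom_prefix:
  assumes x: "is_path x" and j: "non_max_label (x j)" "j < n"
    and bottom: "\<forall>i<n. x i \<le> 1" and "k \<le> n"
  shows "rank (vershik x) k = (rank x k + 1) mod 2^k"
proof -
  obtain k0 where k0: "k0 \<le> j" "non_max_label (x k0)" "\<forall>i<k0. \<not> non_max_label (x i)"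
    using first_non_max_label[of x j] j(1) by blast
  have vershik: "vershik x = vershik_at x k0" by (rule vershik_eq_at[OF k0(2,3)])
  have paths: "num_paths x k = 2^k" by (rule num_paths_bottom_prefix[OF x bottom \<open>k \<le> n\<close>])
  show ?thesis
  proof (cases "k \<le> k0")
    case True
    have "x k0 \<le> 1" using k0(1) j(2) bottom by simp
    then have "x k0 = 0" using k0(2) by (simp add: non_max_label_def)
    then have "rank (vershik x) k = 0"
      using True unfolding vershik by (intro rank_min_prefix) (auto simp: vershik_at_def label_succ_def)
    moreover have "rank x k + 1 = num_paths x k"
      by (rule rank_max_prefix[OF x]) (use k0(3) True in auto)
    ultimately show ?thesis using paths by simp
  next
    case False
    then have "rank x k + 1 < 2^k"
      using rank_Suc_less_num_paths[OF x k0(2), of k] paths by simp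
    then show ?thesis
      using False rank_vershik_at[OF x k0(2,3), of k] vershik by simp
  qed
qed

lemma weight_sum_vershik_gain:
  assumes x: "is_path x" and j: "non_max_label (x j)" "j < n" and bottom: "\<forall>i<n. x i \<le> 1"
  shows "int (weight_sum (vershik x) n) \<ge> int (weight_sum x n) + int n - 2 * 2^wrap_bound x"
proof -
  define c where "c k = int (weight k (rank (vershik x) k)) - int (weight k (rank x k))" for k
  have "c k \<ge> 1 - (if k < wrap_bound x then 2^k else 0)" if k: "k \<in> {1..n}" for k
  proof -
    have "rank (vershik x) k = (rank x k + 1) mod 2^k"
      using k by (intro rank_vershik_bottom_prefix[OF x j bottom]) auto
    then have "c k \<ge> 1 - (if (rank x k + 2^weight_shift k) mod 2^k = 2^k - 1 then 2^k else 0)"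
      using weight_succ_ge[of k "rank x k"] by (simp add: c_def)
    moreover have "(rank x k + 2^weight_shift k) mod 2^k = 2^k - 1 \<Longrightarrow> k < wrap_bound x"
      using k bottom by (intro wrapping_level_less_wrap_bound) auto
    moreover have "(0::int) < 2^k" by simp
    ultimately show ?thesis by (smt (verit))
  qed
  then have "(\<Sum>k\<in>{1..n}. c k) \<ge> int n - 2 * 2^wrap_bound x"
    by (intro sum_increments_ge) blast
  moreover have "(\<Sum>k\<in>{1..n}. c k) = int (weight_sum (vershik x) n) - int (weight_sum x n)"
    unfolding c_def weight_sum_def by (simp add: sum_subtractf)
  ultimately show ?thesis by simp
qed

lemma depth_vershik_gain_non_max:
  assumes x: "is_path x" and j: "non_max_label (x j)"
    and n: "j + 2 + M + 2 * 2^wrap_bound x \<le> n"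
  shows "depth x n + M \<le> depth (vershik x) n"
proof -
  have "vershik x (n-1) = x (n-1)" using rank_vershik(2)[OF x j, of "n-1"] n by simp
  moreover have rank: "rank (vershik x) n = rank x n + 1" using rank_vershik(1)[OF x j] n by simp
  moreover have "n \<noteq> 0" using n by simp
  ultimately have depths:
    "depth (vershik x) n = (if 2 \<le> x (n-1) then 2^(n+1) + n * (rank x n + 1)
                             else weight_sum (vershik x) n)"
    "depth x n = (if 2 \<le> x (n-1) then 2^(n+1) + n * rank x n else weight_sum x n)"
    by (simp_all add: depth_def del: rank.simps)
  show ?thesis
  proof (cases "2 \<le> x (n-1)")
    case True
    then show ?thesis using depths n by simp
  next
    case False
    have "\<forall>i<n. x i \<le> 1"
    proof (intro allI impI, rule ccontr)
      fix i assume "i < n" "\<not> x i \<le> 1"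
      then show False using is_path_top_persists[OF x, of i "n-1"] False by simp
    qed
    then have "int (weight_sum (vershik x) n) \<ge> int (weight_sum x n) + int n - 2 * 2^wrap_bound x"
      using weight_sum_vershik_gain[OF x j] n by simp
    moreover have "int M + 2 * 2 ^ wrap_bound x \<le> int n"
    proof -
      have "M + 2 * 2 ^ wrap_bound x \<le> n" using n by simp
      then have "int (M + 2 * 2 ^ wrap_bound x) \<le> int n" by (simp only: of_nat_le_iff)
      then show ?thesis by simp
    qed
    ultimately show ?thesis using depths False by simp
  qed
qed

lemma weight_zero: "1 \<le> k \<Longrightarrow> weight k 0 = 1 + 2^weight_shift k"
  using weight_shift_less[of k] by (simp add: weight_def)

lemma weight_top: "1 \<le> k \<Longrightarrow> weight k (2^k - 1) = 2^weight_shift k"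
proof -
  assume k: "1 \<le> k"
  have a: "(2::nat)^weight_shift k < 2^k" using weight_shift_less[OF k] by simp
  then have "(2::nat)^k - 1 + 2^weight_shift k = (2^weight_shift k - 1) + 2^k * 1" by simp
  then have "((2::nat)^k - 1 + 2^weight_shift k) mod 2^k = (2^weight_shift k - 1) mod 2^k"
    by (simp only: mod_mult_self2)
  also have "\<dots> = 2^weight_shift k - 1" using a by (intro mod_less) linarith
  finally show ?thesis by (simp add: weight_def)
qed

lemma weight_sum_zeros: "weight_sum (\<lambda>i. 0) n = n + (\<Sum>k\<in>{1..n}. 2^weight_shift k)"
proof -
  have "weight_sum (\<lambda>i. 0) n = (\<Sum>k\<in>{1..n}. 1 + 2^weight_shift k)"
    unfolding weight_sum_def using rank_min_prefix[of _ "\<lambda>i. 0"] weight_zero by (intro sum.cong) auto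
  then show ?thesis unfolding sum.distrib by simp
qed

lemma weight_sum_ones: "weight_sum (\<lambda>i. 1) n = (\<Sum>k\<in>{1..n}. 2^weight_shift k)"
proof -
  have "rank (\<lambda>i. 1) k + 1 = 2^k" for k
    using rank_max_prefix[OF is_path_ones] by (auto simp: num_paths_def non_max_label_def)
  then have "rank (\<lambda>i. 1) k = 2^k - 1" for k by (metis add_diff_cancel_right')
  then show ?thesis unfolding weight_sum_def using weight_top by (intro sum.cong) auto
qed

lemma double_pow_weight_shift_le: "2 \<le> n \<Longrightarrow> 2 * 2^weight_shift n \<le> n"
proof -
  assume n: "2 \<le> n"
  have "floor_log n \<noteq> 0"
  proof
    assume "floor_log n = 0"
    then show False using floor_log_exp2_gt[of n] n by simp
  qed
  then have "2 * 2^weight_shift n = 2^floor_log n" by (simp add: weight_shift_def flip: power_Suc)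
  also have "\<dots> \<le> n" using floor_log_exp2_le[of n] n by simp
  finally show ?thesis .
qed

text \<open>The shift in the weights pays for the level lost when the maximal path jumps to the
  minimal one.\<close>

lemma depth_vershik_gain_max_path:
  assumes "2 * M + 4 \<le> n"
  shows "depth (\<lambda>i. 1) n + M \<le> depth (\<lambda>i. 0) (n - 1)"
proof -
  obtain n' where n': "n = Suc n'" using assms by (cases n) auto
  have "depth (\<lambda>i. 0) n' = n' + (\<Sum>k\<in>{1..n'}. 2^weight_shift k)"
    using assms n' by (simp add: depth_def weight_sum_zeros)
  moreover have "depth (\<lambda>i. 1) n = weight_sum (\<lambda>i. 1) n" by (simp add: depth_def n')
  then have "depth (\<lambda>i. 1) n = (\<Sum>k\<in>{1..n'}. 2^weight_shift k) + 2^weight_shift n"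
    unfolding weight_sum_ones n' by (simp add: atLeastAtMostSuc_conv)
  moreover have "2 * 2^weight_shift n \<le> n" by (rule double_pow_weight_shift_le) (use assms in simp)
  ultimately show ?thesis using assms n' by simp
qed

text \<open>The combinatorial core of f' = 0: for y close to x, the images of x and y under the
  Vershik map first differ arbitrarily much deeper than x and y do.\<close>

lemma vershik_depth_gain:
  assumes x: "is_path x"
  shows "\<exists>N. \<forall>n\<ge>N. \<forall>y. (\<forall>i<n. y i = x i) \<longrightarrow>
    (\<exists>m. (\<forall>i<m. vershik y i = vershik x i) \<and> depth x n + M \<le> depth (vershik x) m)"
proof (cases "\<exists>k. non_max_label (x k)")
  case True
  then obtain k0 where k0: "non_max_label (x k0)" "\<forall>i<k0. \<not> non_max_label (x i)"
    by (auto simp: exists_least_iff[where P="\<lambda>k::nat. non_max_label (x k)"])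
  show ?thesis
  proof (rule exI, intro allI impI)
    fix n y assume n: "k0 + 2 + M + 2 * 2^wrap_bound x \<le> n" and y: "\<forall>i<n. y i = x i"
    have "vershik y = vershik_at y k0"
      by (rule vershik_eq_at) (use k0 y n in auto)
    then have "\<forall>i<n. vershik y i = vershik x i"
      using y n vershik_eq_at[OF k0] by (auto simp: vershik_at_def)
    then show "\<exists>m. (\<forall>i<m. vershik y i = vershik x i) \<and> depth x n + M \<le> depth (vershik x) m"
      using depth_vershik_gain_non_max[OF x k0(1) n] by blast
  qed
next
  case False
  have ones: "x = (\<lambda>i. 1)" by (rule max_path_eq_ones[OF x]) (use False in blast)
  have zeros: "vershik x = (\<lambda>i. 0)" using False by (simp add: vershik_def)
  show ?thesis
  proof (rule exI, intro allI impI)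
    fix n y assume n: "2 * M + 4 \<le> n" and y: "\<forall>i<n. y i = x i"
    have "\<forall>i<n-1. vershik y i = 0"
    proof (cases "\<exists>k. non_max_label (y k)")
      case True
      then obtain k where k: "non_max_label (y k)" "\<forall>i<k. \<not> non_max_label (y i)"
        by (auto simp: exists_least_iff[where P="\<lambda>k::nat. non_max_label (y k)"])
      have "n \<le> k" using k(1) y ones by (auto simp: non_max_label_def not_le[symmetric])
      then show ?thesis using vershik_eq_at[OF k] by (auto simp: vershik_at_def)
    qed (simp add: vershik_def)
    then show "\<exists>m. (\<forall>i<m. vershik y i = vershik x i) \<and> depth x n + M \<le> depth (vershik x) m"
      using depth_vershik_gain_max_path[OF n] ones zeros by auto
  qed
qed

section \<open>The embedding into the real line\<close>

definition scale :: "(nat \<Rightarrow> nat) \<Rightarrow> nat \<Rightarrow> real" where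
  "scale x n = (1/16) ^ depth x n"

definition embed_term :: "(nat \<Rightarrow> nat) \<Rightarrow> nat \<Rightarrow> real" where
  "embed_term x n = real (x n) * scale x n"

definition embed :: "(nat \<Rightarrow> nat) \<Rightarrow> real" where
  "embed x = (\<Sum>n. embed_term x n)"

definition embed_tail :: "(nat \<Rightarrow> nat) \<Rightarrow> nat \<Rightarrow> real" where
  "embed_tail x m = (\<Sum>i. embed_term x (i + m))"

lemma scale_pos: "0 < scale x n"
  by (simp add: scale_def)

lemma scale_prefix_cong: "\<forall>i<n. x i = y i \<Longrightarrow> scale x n = scale y n"
  using depth_prefix_cong[of n x y] by (simp add: scale_def)

lemma scale_shift_le:
  assumes "is_path x"
  shows "scale x (n + i) \<le> scale x n * (1/16)^i"
proof -
  have "(1/16::real) ^ depth x (n + i) \<le> (1/16) ^ (depth x n + i)"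
    using depth_add_le[OF assms, of n "n + i"] by (intro power_decreasing) auto
  then show ?thesis by (simp add: scale_def power_add)
qed

lemma scale_le_pow: "is_path x \<Longrightarrow> scale x n \<le> (1/16)^n"
  using depth_add_le[of x 0 n] by (simp add: scale_def depth_def power_decreasing)

lemma scale_antimono: "is_path x \<Longrightarrow> m \<le> n \<Longrightarrow> scale x n \<le> scale x m"
  using depth_add_le[of x m n] by (simp add: scale_def power_decreasing)

lemma pow_depth_bound_le_scale: "is_path x \<Longrightarrow> (1/16)^depth_bound n \<le> scale x n"
  using depth_le_depth_bound[of x n] by (simp add: scale_def power_decreasing)

lemma embed_term_nonneg: "0 \<le> embed_term x n"
  by (simp add: embed_term_def scale_def)

lemma embed_term_le: "is_path x \<Longrightarrow> embed_term x (i + m) \<le> 5 * scale x m * (1/16)^i"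
proof -
  assume x: "is_path x"
  have "real (x (i + m)) \<le> 5" using is_pathD(1)[OF x, of "i + m"] by simp
  moreover have "scale x (i + m) \<le> scale x m * (1/16)^i"
    using scale_shift_le[OF x, of m i] by (simp add: add.commute)
  ultimately have "real (x (i + m)) * scale x (i + m) \<le> 5 * (scale x m * (1/16)^i)"
    by (intro mult_mono) (auto simp: scale_pos less_imp_le)
  then show ?thesis by (simp add: embed_term_def)
qed

lemma summable_geometric_16: "summable (\<lambda>i. c * (1/16::real)^i)"
  by (intro summable_mult summable_geometric) simp

lemma summable_embed_tail: "is_path x \<Longrightarrow> summable (\<lambda>i. embed_term x (i + m))"
  by (rule summable_comparison_test'[OF summable_geometric_16[of "5 * scale x m"], of 0])
     (use embed_term_le embed_term_nonneg in auto)

lemma embed_tail_bounds: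
  assumes x: "is_path x"
  shows "0 \<le> embed_tail x m" "embed_tail x m \<le> 16/3 * scale x m"
proof -
  have "embed_tail x m \<le> (\<Sum>i. 5 * scale x m * (1/16)^i)"
    unfolding embed_tail_def
    by (rule suminf_le) (use embed_term_le[OF x] summable_embed_tail[OF x] summable_geometric_16 in auto)
  also have "\<dots> = 16/3 * scale x m"
    using suminf_geometric[of "1/16::real"] by (subst suminf_mult) (auto intro: summable_geometric)
  finally show "embed_tail x m \<le> 16/3 * scale x m" .
  show "0 \<le> embed_tail x m" unfolding embed_tail_def
    by (rule suminf_nonneg) (use summable_embed_tail[OF x] embed_term_nonneg in auto)
qed

lemma summable_embed_term: "is_path x \<Longrightarrow> summable (embed_term x)"
  using summable_embed_tail[of x 0] by simp

lemma embed_split: "is_path x \<Longrightarrow> embed x = (\<Sum>i<m. embed_term x i) + embed_tail x m"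
  unfolding embed_def embed_tail_def
  using suminf_split_initial_segment[OF summable_embed_term, of x m] by simp

lemma embed_tail_Suc: "is_path x \<Longrightarrow> embed_tail x m = embed_term x m + embed_tail x (Suc m)"
  using embed_split[of x m] embed_split[of x "Suc m"] by simp

lemma embed_prefix_sum_cong:
  "\<forall>i<m. x i = y i \<Longrightarrow> (\<Sum>i<m. embed_term x i) = (\<Sum>i<m. embed_term y i)"
  by (intro sum.cong) (auto simp: embed_term_def scale_prefix_cong)

lemma embed_dist_le:
  assumes x: "is_path x" and y: "is_path y" and prefix: "\<forall>i<m. x i = y i"
  shows "\<bar>embed x - embed y\<bar> \<le> 16/3 * scale x m"
proof -
  have "embed x - embed y = embed_tail x m - embed_tail y m"
    using embed_split[OF x, of m] embed_split[OF y, of m] embed_prefix_sum_cong[OF prefix] by simp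
  then show ?thesis
    using embed_tail_bounds[OF x, of m] embed_tail_bounds[OF y, of m] scale_prefix_cong[OF prefix]
    unfolding abs_le_iff by linarith
qed

text \<open>Differing digits contribute at least scale x m, while each tail beyond is at most a third
  of that, because depth jumps by at least one per level.\<close>

lemma embed_dist_ge:
  assumes x: "is_path x" and y: "is_path y" and prefix: "\<forall>i<m. x i = y i" and "x m \<noteq> y m"
  shows "2/3 * scale x m \<le> \<bar>embed x - embed y\<bar>"
proof -
  have same_scale: "scale y m = scale x m" using scale_prefix_cong[OF prefix] by simp
  have "1 \<le> \<bar>real (x m) - real (y m)\<bar>" using \<open>x m \<noteq> y m\<close> by linarith
  then have digit: "scale x m \<le> \<bar>embed_term x m - embed_term y m\<bar>"
    using same_scale scale_pos[of x m] by (simp add: embed_term_def abs_mult flip: left_diff_distrib)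
  have "embed_tail z (Suc m) \<le> 16/3 * (scale x m / 16)" if "is_path z" "scale z m = scale x m" for z
    using embed_tail_bounds(2)[OF that(1), of "Suc m"] scale_shift_le[OF that(1), of m 1] that(2)
    by simp
  then have "embed_tail x (Suc m) \<le> scale x m / 3" "embed_tail y (Suc m) \<le> scale x m / 3"
    using x y same_scale by fastforce+
  moreover have "0 \<le> embed_tail x (Suc m)" "0 \<le> embed_tail y (Suc m)"
    using embed_tail_bounds(1) x y by blast+
  moreover have "embed x - embed y = (embed_term x m - embed_term y m)
      + (embed_tail x (Suc m) - embed_tail y (Suc m))"
    using embed_split[OF x, of m] embed_split[OF y, of m] embed_tail_Suc[OF x, of m]
      embed_tail_Suc[OF y, of m] embed_prefix_sum_cong[OF prefix] by simp
  ultimately show ?thesis using digit by linarith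
qed

lemma first_difference:
  fixes x y :: "nat \<Rightarrow> 'a"
  assumes "x \<noteq> y"
  obtains n where "\<forall>i<n. x i = y i" "x n \<noteq> y n"
  using assms exists_least_iff[where P="\<lambda>i. x i \<noteq> y i"] by (auto simp: fun_eq_iff)

lemma embed_inj: "is_path x \<Longrightarrow> is_path y \<Longrightarrow> embed x = embed y \<Longrightarrow> x = y"
  by (metis first_difference embed_dist_ge scale_pos diff_self abs_zero
      mult_pos_pos zero_less_divide_iff zero_less_numeral not_le)

section \<open>Closed sets of paths\<close>

lemma ex_mult_power_less:
  fixes e b c :: real
  assumes "0 < e" "0 < b" "b < 1"
  shows "\<exists>n. c * b^n < e"
proof (cases "c \<le> 0")
  case True
  then show ?thesis using assms by (intro exI[of _ 0]) auto
next
  case False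
  then obtain n where "b^n < e / c" using real_arch_pow_inv[of "e/c" b] assms by auto
  then show ?thesis using False by (intro exI[of _ n]) (simp add: field_simps)
qed

lemma embed_close_if_long_prefix:
  assumes x: "is_path x" and "0 < e"
  shows "\<exists>n. \<forall>y. is_path y \<longrightarrow> (\<forall>i<n. y i = x i) \<longrightarrow> dist (embed y) (embed x) < e"
proof -
  obtain n where n: "16/3 * (1/16::real)^n < e"
    using ex_mult_power_less[of e "1/16" "16/3"] \<open>0 < e\<close> by auto
  have "dist (embed y) (embed x) < e" if "is_path y" "\<forall>i<n. y i = x i" for y
  proof -
    have "\<bar>embed x - embed y\<bar> \<le> 16/3 * scale x n" by (rule embed_dist_le) (use x that in auto)
    also have "\<dots> \<le> 16/3 * (1/16)^n" using scale_le_pow[OF x, of n] by simp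
    finally show ?thesis using n by (simp add: dist_real_def abs_minus_commute)
  qed
  then show ?thesis by blast
qed

lemma embed_close_imp_agree:
  assumes a: "is_path a" and b: "is_path b"
    and close: "\<bar>embed a - embed b\<bar> < 2/3 * (1/16)^depth_bound n" and "i \<le> n"
  shows "a i = b i"
proof (rule ccontr)
  assume "a i \<noteq> b i"
  then have "b \<noteq> a" by auto
  then obtain d where d: "\<forall>j<d. b j = a j" "b d \<noteq> a d" by (rule first_difference)
  have "d \<le> n"
  proof (rule ccontr)
    assume "\<not> d \<le> n"
    then show False using d(1) \<open>a i \<noteq> b i\<close> \<open>i \<le> n\<close> by auto
  qed
  have "2/3 * scale b d \<le> \<bar>embed b - embed a\<bar>" by (rule embed_dist_ge[OF b a d])
  moreover have "(1/16::real)^depth_bound n \<le> (1/16)^depth_bound d"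
    using depth_bound_mono[OF \<open>d \<le> n\<close>] by (intro power_decreasing) auto
  moreover have "(1/16::real)^depth_bound d \<le> scale b d" by (rule pow_depth_bound_le_scale[OF b])
  ultimately show False using close by (simp add: abs_minus_commute)
qed

lemma Cauchy_embed_digits_stabilize:
  assumes paths: "\<And>j. is_path (u j)" and C: "Cauchy (\<lambda>j. embed (u j))"
  obtains J x where "\<And>n a i. J n \<le> a \<Longrightarrow> i < n \<Longrightarrow> u a i = x i"
proof -
  have "\<exists>J. \<forall>a\<ge>J. \<forall>b\<ge>J. \<bar>embed (u a) - embed (u b)\<bar> < 2/3 * (1/16)^depth_bound n" for n
    using CauchyD[OF C, of "2/3 * (1/16)^depth_bound n"] by (simp add: real_norm_def)
  then obtain J where J: "\<And>n a b. J n \<le> a \<Longrightarrow> J n \<le> b \<Longrightarrow>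
      \<bar>embed (u a) - embed (u b)\<bar> < 2/3 * (1/16)^depth_bound n"
    by metis
  have agree: "u a i = u b i" if "J n \<le> a" "J n \<le> b" "i \<le> n" for n a b i
    using embed_close_imp_agree[OF paths paths J[OF that(1,2)] that(3)] .
  define J' where "J' n = (\<Sum>i\<le>n. J i)" for n
  have J_le: "J i \<le> J' n" if "i \<le> n" for i n
    unfolding J'_def by (rule member_le_sum) (use that in auto)
  have "u a i = u (J' i) i" if "J' n \<le> a" "i < n" for n a i
    using agree[of i a "J' i" i] J_le[of i i] J_le[of i n] that by simp
  then show thesis by (rule that)
qed

definition prefix_closed :: "(nat \<Rightarrow> nat) set \<Rightarrow> bool" where
  "prefix_closed S \<longleftrightarrow> (\<forall>x. (\<forall>n. \<exists>y\<in>S. \<forall>i<n. y i = x i) \<longrightarrow> x \<in> S)"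

lemma closed_embed_image:
  assumes paths: "S \<subseteq> Collect is_path" and "prefix_closed S"
  shows "closed (embed ` S)"
  unfolding closed_sequential_limits
proof (intro allI impI, elim conjE)
  fix s l assume sS: "\<forall>n. s n \<in> embed ` S" and lim: "s \<longlonglongrightarrow> l"
  then have "\<forall>j. \<exists>y. y \<in> S \<and> s j = embed y" by blast
  then obtain u where "\<forall>j. u j \<in> S \<and> s j = embed (u j)"
    using choice[of "\<lambda>j y. y \<in> S \<and> s j = embed y"] by blast
  then have u: "\<And>j. u j \<in> S" "\<And>j. s j = embed (u j)" by auto
  have up: "\<And>j. is_path (u j)" using u(1) paths by auto
  have "(\<lambda>j. embed (u j)) = s" using u(2) by auto
  then have "Cauchy (\<lambda>j. embed (u j))" using LIMSEQ_imp_Cauchy[OF lim] by simp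
  then obtain J x where J: "\<And>n a i. J n \<le> a \<Longrightarrow> i < n \<Longrightarrow> u a i = x i"
    using Cauchy_embed_digits_stabilize[of u, OF up] by blast
  have "\<exists>y\<in>S. \<forall>i<n. y i = x i" for n
    using J[of n "J n"] u(1) by blast
  then have "x \<in> S" using \<open>prefix_closed S\<close> unfolding prefix_closed_def by blast
  then have x: "is_path x" using paths by auto
  have "s \<longlonglongrightarrow> embed x"
  proof (rule metric_LIMSEQ_I)
    fix r :: real assume "0 < r"
    then obtain n where n: "\<forall>y. is_path y \<longrightarrow> (\<forall>i<n. y i = x i) \<longrightarrow> dist (embed y) (embed x) < r"
      using embed_close_if_long_prefix[OF x] by blast
    show "\<exists>N. \<forall>a\<ge>N. dist (s a) (embed x) < r"
    proof (intro exI allI impI)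
      fix a assume "J n \<le> a"
      then have "\<forall>i<n. u a i = x i" using J by blast
      then show "dist (s a) (embed x) < r" using n[rule_format, OF up] u(2) by simp
    qed
  qed
  then have "l = embed x" using lim LIMSEQ_unique by blast
  then show "l \<in> embed ` S" using \<open>x \<in> S\<close> by simp
qed

lemma prefix_closed_paths: "prefix_closed (Collect is_path)"
  unfolding prefix_closed_def
proof (intro allI impI)
  fix x assume h: "\<forall>n. \<exists>y\<in>Collect is_path. \<forall>i<n. y i = x i"
  have "x i \<le> 5 \<and> (2 \<le> x i \<longleftrightarrow> 4 \<le> x (Suc i))" for i
  proof -
    obtain y where "is_path y" "\<forall>j<i+2. y j = x j" using h[rule_format, of "i+2"] by auto
    then show ?thesis using is_pathD[of y i] by auto
  qed
  then show "x \<in> Collect is_path" by (simp add: is_path_def)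
qed

lemma prefix_closed_bottom_paths: "prefix_closed {x. is_path x \<and> bottom_path x}"
  unfolding prefix_closed_def
proof (intro allI impI)
  fix x assume h: "\<forall>n. \<exists>y\<in>{x. is_path x \<and> bottom_path x}. \<forall>i<n. y i = x i"
  have "x i \<le> 5 \<and> (2 \<le> x i \<longleftrightarrow> 4 \<le> x (Suc i)) \<and> x i \<le> 1" for i
  proof -
    obtain y where y: "is_path y" "bottom_path y" "\<forall>j<i+2. y j = x j"
      using h[rule_format, of "i+2"] by auto
    have "y i = x i" "y (Suc i) = x (Suc i)" using y(3) by simp_all
    moreover have "y i \<le> 1" using y(2) by (simp add: bottom_path_def)
    ultimately show ?thesis using is_pathD[OF y(1), of i] by auto
  qed
  then show "x \<in> {x. is_path x \<and> bottom_path x}" by (simp add: is_path_def bottom_path_def)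
qed

lemma abs_embed_le:
  assumes "is_path x"
  shows "\<bar>embed x\<bar> \<le> 16/3"
proof -
  have "embed x = embed_tail x 0" using embed_split[OF assms, of 0] by simp
  moreover have "scale x 0 = 1" by (simp add: scale_def depth_def)
  ultimately show ?thesis using embed_tail_bounds[OF assms, of 0] by simp
qed

section \<open>The Vershik map on the embedded Cantor set\<close>

lemma scale_vershik_le:
  assumes "depth x n + M \<le> depth (vershik x) m"
  shows "scale (vershik x) m \<le> scale x n * (1/16)^M"
proof -
  have "(1/16::real) ^ depth (vershik x) m \<le> (1/16) ^ (depth x n + M)"
    using assms by (intro power_decreasing) auto
  then show ?thesis by (simp add: scale_def power_add)
qed

lemma embed_vershik_dist_le:
  assumes x: "is_path x"
  shows "\<exists>d>0. \<forall>y. is_path y \<longrightarrow> y \<noteq> x \<longrightarrow> \<bar>embed y - embed x\<bar> < d \<longrightarrow>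
    \<bar>embed (vershik y) - embed (vershik x)\<bar> \<le> 8 * (1/16)^M * \<bar>embed y - embed x\<bar>"
proof -
  obtain N where N: "\<forall>n\<ge>N. \<forall>y. (\<forall>i<n. y i = x i) \<longrightarrow>
      (\<exists>m. (\<forall>i<m. vershik y i = vershik x i) \<and> depth x n + M \<le> depth (vershik x) m)"
    using vershik_depth_gain[OF x, of M] by blast
  have "\<bar>embed (vershik y) - embed (vershik x)\<bar> \<le> 8 * (1/16)^M * \<bar>embed y - embed x\<bar>"
    if y: "is_path y" "y \<noteq> x" and close: "\<bar>embed y - embed x\<bar> < 2/3 * scale x N" for y
  proof -
    obtain n where n: "\<forall>i<n. y i = x i" "y n \<noteq> x n" using first_difference[OF y(2)] by blast
    have far: "2/3 * scale x n \<le> \<bar>embed y - embed x\<bar>"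
      using embed_dist_ge[OF y(1) x n] scale_prefix_cong[OF n(1)] by simp
    have "N \<le> n"
    proof (rule ccontr)
      assume "\<not> N \<le> n"
      then show False using scale_antimono[OF x, of n N] far close by simp
    qed
    then obtain m where m: "\<forall>i<m. vershik y i = vershik x i" "depth x n + M \<le> depth (vershik x) m"
      using N n(1) by blast
    have "\<bar>embed (vershik y) - embed (vershik x)\<bar> \<le> 16/3 * scale (vershik x) m"
      using embed_dist_le[OF is_path_vershik[OF y(1)] is_path_vershik[OF x] m(1)]
        scale_prefix_cong[OF m(1)] by simp
    also have "\<dots> \<le> 16/3 * (scale x n * (1/16)^M)"
      using scale_vershik_le[OF m(2)] by simp
    also have "\<dots> = 8 * (1/16)^M * (2/3 * scale x n)" by simp
    also have "\<dots> \<le> 8 * (1/16)^M * \<bar>embed y - embed x\<bar>"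
      using far by (intro mult_left_mono) auto
    finally show ?thesis .
  qed
  moreover have "0 < 2/3 * scale x N" using scale_pos[of x N] by simp
  ultimately show ?thesis by blast
qed

definition embedded_paths :: "real set" where
  "embedded_paths = embed ` Collect is_path"

definition embedded_vershik :: "real \<Rightarrow> real" where
  "embedded_vershik z = embed (vershik (inv_into (Collect is_path) embed z))"

lemma inj_on_embed: "inj_on embed (Collect is_path)"
  by (rule inj_onI) (auto intro: embed_inj)

lemma embedded_vershik_embed: "is_path x \<Longrightarrow> embedded_vershik (embed x) = embed (vershik x)"
  unfolding embedded_vershik_def using inv_into_f_f[OF inj_on_embed, of x] by simp

lemma funpow_embedded_vershik_embed:
  "is_path x \<Longrightarrow> (embedded_vershik ^^ n) (embed x) = embed ((vershik ^^ n) x)"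
  by (induction n) (simp_all add: embedded_vershik_embed is_path_funpow_vershik)

lemma embedded_paths_iff: "z \<in> embedded_paths \<longleftrightarrow> (\<exists>x. is_path x \<and> z = embed x)"
  by (auto simp: embedded_paths_def)

lemma embedded_vershik_diff_quotient_tendsto_0:
  assumes "z \<in> embedded_paths"
  shows "((\<lambda>w. (embedded_vershik w - embedded_vershik z) / (w - z)) \<longlongrightarrow> 0)
    (at z within embedded_paths)"
proof -
  obtain x where x: "is_path x" and z: "z = embed x" using assms by (auto simp: embedded_paths_iff)
  show ?thesis unfolding tendsto_iff eventually_at
  proof (intro allI impI)
    fix \<epsilon> :: real assume "0 < \<epsilon>"
    then obtain M where M: "8 * (1/16::real)^M < \<epsilon>"
      using ex_mult_power_less[of \<epsilon> "1/16" 8] by auto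
    obtain d where d: "0 < d" "\<forall>y. is_path y \<longrightarrow> y \<noteq> x \<longrightarrow> \<bar>embed y - embed x\<bar> < d \<longrightarrow>
        \<bar>embed (vershik y) - embed (vershik x)\<bar> \<le> 8 * (1/16)^M * \<bar>embed y - embed x\<bar>"
      using embed_vershik_dist_le[OF x, of M] by blast
    have "\<bar>(embedded_vershik w - embedded_vershik z) / (w - z)\<bar> < \<epsilon>"
      if w: "w \<in> embedded_paths" "w \<noteq> z" "dist w z < d" for w
    proof -
      obtain y where y: "is_path y" "w = embed y" using w(1) by (auto simp: embedded_paths_iff)
      have "\<bar>embedded_vershik w - embedded_vershik z\<bar> \<le> 8 * (1/16)^M * \<bar>w - z\<bar>"
        using d(2) y w(2,3) x z embedded_vershik_embed by (auto simp: dist_real_def)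
      then have "\<bar>embedded_vershik w - embedded_vershik z\<bar> / \<bar>w - z\<bar> \<le> 8 * (1/16)^M"
        using w(2) by (simp add: divide_le_eq)
      then show ?thesis using M by (simp add: abs_divide)
    qed
    then show "\<exists>d>0. \<forall>w\<in>embedded_paths. w \<noteq> z \<and> dist w z < d \<longrightarrow>
        dist ((embedded_vershik w - embedded_vershik z) / (w - z)) 0 < \<epsilon>"
      using d(1) by auto
  qed
qed

lemma compact_embedded_paths: "compact embedded_paths"
proof -
  have "closed embedded_paths"
    unfolding embedded_paths_def by (rule closed_embed_image[OF order_refl prefix_closed_paths])
  moreover have "bounded embedded_paths"
    unfolding bounded_iff embedded_paths_def using abs_embed_le by (intro exI[of _ "16/3"]) auto
  ultimately show ?thesis by (simp add: compact_eq_bounded_closed)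
qed

lemma embedded_vershik_image: "embedded_vershik ` embedded_paths = embedded_paths"
proof
  show "embedded_vershik ` embedded_paths \<subseteq> embedded_paths"
    using is_path_vershik by (auto simp: embedded_paths_def embedded_vershik_embed)
  show "embedded_paths \<subseteq> embedded_vershik ` embedded_paths"
  proof
    fix z assume "z \<in> embedded_paths"
    then obtain y where y: "is_path y" "z = embed y" by (auto simp: embedded_paths_iff)
    then have "z = embedded_vershik (embed (vershik_inv y))"
      using embedded_vershik_embed[OF is_path_vershik_inv] vershik_vershik_inv by simp
    moreover have "embed (vershik_inv y) \<in> embedded_paths"
      using is_path_vershik_inv[OF y(1)] by (auto simp: embedded_paths_iff)
    ultimately show "z \<in> embedded_vershik ` embedded_paths" by blast
  qed
qed

lemma inj_on_embedded_vershik: "inj_on embedded_vershik embedded_paths"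
proof (rule inj_onI)
  fix a b assume "a \<in> embedded_paths" "b \<in> embedded_paths" "embedded_vershik a = embedded_vershik b"
  then obtain x y where xy: "is_path x" "is_path y" "a = embed x" "b = embed y"
      "embed (vershik x) = embed (vershik y)"
    by (auto simp: embedded_paths_iff embedded_vershik_embed)
  then have "vershik x = vershik y" using embed_inj is_path_vershik by blast
  then have "x = y" using vershik_inv_vershik xy(1,2) by metis
  then show "a = b" using xy by simp
qed

lemma embedded_vershik_has_derivative_0:
  "z \<in> embedded_paths \<Longrightarrow> (embedded_vershik has_field_derivative 0) (at z within embedded_paths)"
  using embedded_vershik_diff_quotient_tendsto_0 by (simp add: has_field_derivative_iff)

lemma continuous_on_embedded_vershik: "continuous_on embedded_paths embedded_vershik"
  unfolding continuous_on_eq_continuous_within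
  using embedded_vershik_has_derivative_0 DERIV_continuous by blast

lemma homeomorphism_embedded_vershik:
  "\<exists>g. homeomorphism embedded_paths embedded_paths embedded_vershik g"
  by (rule homeomorphism_compact[OF compact_embedded_paths continuous_on_embedded_vershik
        embedded_vershik_image inj_on_embedded_vershik])

text \<open>A connected subset of the real line containing two points contains the interval between
  them, on which f would be constant.\<close>

lemma totally_disconnected_if_inj_derivative_0:
  fixes f :: "real \<Rightarrow> real" and S :: "real set"
  assumes inj: "inj_on f S" and deriv: "\<And>z. z \<in> S \<Longrightarrow> (f has_field_derivative 0) (at z within S)"
  shows "totally_disconnected S"
  unfolding totally_disconnected_def
proof (intro allI impI)
  fix C assume C: "C \<subseteq> S \<and> connected C"
  show "\<exists>a. C \<subseteq> {a}"
  proof (rule ccontr)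
    assume "\<not> (\<exists>a. C \<subseteq> {a})"
    then obtain p q where pq: "p \<in> C" "q \<in> C" "p < q" by (metis insertI1 linorder_neqE subsetI singletonD)
    have sub: "{p..q} \<subseteq> S" using connected_contains_Icc[of C p q] C pq by blast
    have "\<exists>c. \<forall>z\<in>{p..q}. f z = c"
    proof (rule has_field_derivative_zero_constant)
      fix z assume "z \<in> {p..q}"
      then show "(f has_field_derivative 0) (at z within {p..q})"
        using deriv[of z] sub DERIV_subset by blast
    qed simp
    then have "f p = f q" using pq by auto
    then show False using inj_onD[OF inj] pq C by fastforce
  qed
qed

text \<open>Changing the digit at a deep level n (and completing it to a path) gives a different
  point of K within 16/3 * 16^-n.\<close>

lemma embedded_paths_perfect:
  assumes "z \<in> embedded_paths"
  shows "z islimpt embedded_paths"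
  unfolding islimpt_approachable
proof (intro allI impI)
  fix e :: real assume "0 < e"
  obtain x where x: "is_path x" and z: "z = embed x" using assms by (auto simp: embedded_paths_iff)
  obtain n where n: "\<forall>y. is_path y \<longrightarrow> (\<forall>i<n. y i = x i) \<longrightarrow> dist (embed y) (embed x) < e"
    using embed_close_if_long_prefix[OF x \<open>0 < e\<close>] by blast
  define y where "y i = (if i < n then x i else if i = n then
      (if 4 \<le> x n then (if x n = 4 then 5 else 4) else (if x n = 0 then 1 else 0))
      else (if 4 \<le> x n then 4 else 0))" for i
  have y: "is_path y" unfolding is_path_def
  proof
    fix i
    show "y i \<le> 5 \<and> (2 \<le> y i \<longleftrightarrow> 4 \<le> y (Suc i))"
      using is_pathD[OF x, of i] by (cases "Suc i < n"; cases "Suc i = n"; cases "i = n") (auto simp: y_def)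
  qed
  have "y \<noteq> x" by (auto simp: y_def fun_eq_iff intro!: exI[of _ n])
  then have "embed y \<noteq> embed x" using embed_inj[OF y x] by auto
  moreover have "dist (embed y) (embed x) < e" using n y by (simp add: y_def)
  moreover have "embed y \<in> embedded_paths" using y by (auto simp: embedded_paths_iff)
  ultimately show "\<exists>z'\<in>embedded_paths. z' \<noteq> z \<and> dist z' z < e"
    using z by blast
qed

lemma cantor_set_embedded_paths: "cantor_set embedded_paths"
  unfolding cantor_set_def
  using compact_embedded_paths embedded_paths_perfect is_path_zeros
    totally_disconnected_if_inj_derivative_0[OF inj_on_embedded_vershik embedded_vershik_has_derivative_0]
  by (auto simp: embedded_paths_def)

text \<open>Both new paths climb to the top vertex at level n, u by its least and u' by its
  greatest edge there, and then stay on edge 4; so they agree from level n+1 on and u' has the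
  larger rank.\<close>

lemma cylinders_joined_by_orbit:
  assumes x: "is_path x" and x': "is_path x'"
  obtains u u' d where "is_path u" "is_path u'" "\<forall>i<n. u i = x i" "\<forall>i<n. u' i = x' i"
    "1 \<le> d" "(vershik ^^ d) u = u'"
proof -
  define u where "u i = (if i < n then x i else if i = n then (if 4 \<le> x n then 4 else 2) else 4)" for i
  define u' where "u' i = (if i < n then x' i else if i = n then (if 4 \<le> x' n then 5 else 3) else 4)" for i
  have u: "is_path u" unfolding is_path_def
  proof
    fix i
    show "u i \<le> 5 \<and> (2 \<le> u i \<longleftrightarrow> 4 \<le> u (Suc i))"
      using is_pathD[OF x, of i] by (cases "Suc i < n"; cases "Suc i = n"; cases "i = n") (auto simp: u_def)
  qed
  have u': "is_path u'" unfolding is_path_def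
  proof
    fix i
    show "u' i \<le> 5 \<and> (2 \<le> u' i \<longleftrightarrow> 4 \<le> u' (Suc i))"
      using is_pathD[OF x', of i] by (cases "Suc i < n"; cases "Suc i = n"; cases "i = n") (auto simp: u'_def)
  qed
  have ranks: "rank u n = rank x n" "rank u' n = rank x' n"
    by (auto intro: rank_prefix_cong simp: u_def u'_def)
  define P where "P = (2::nat)^n"
  have "rank u (Suc n) < P + (n+1)*P"
    using ranks rank_less_num_paths[OF x, of n]
    by (auto simp: u_def num_paths_def P_def[symmetric] simp del: rank.simps) (auto simp: u_def P_def[symmetric])
  moreover have "P + (n+1)*P \<le> rank u' (Suc n)"
    by (auto simp: u'_def P_def[symmetric])
  ultimately have lt: "rank u (Suc n) < rank u' (Suc n)" by simp
  have "(vershik ^^ (rank u' (Suc n) - rank u (Suc n))) u = u'"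
    by (rule funpow_vershik_rank_diff[OF u u']) (use lt in \<open>auto simp: u_def u'_def\<close>)
  moreover have "1 \<le> rank u' (Suc n) - rank u (Suc n)" using lt by simp
  moreover have "\<forall>i<n. u i = x i" "\<forall>i<n. u' i = x' i" by (simp_all add: u_def u'_def)
  ultimately show thesis using that u u' by blast
qed

lemma dyn_transitive_embedded_vershik: "dyn_transitive embedded_paths embedded_vershik"
  unfolding dyn_transitive_def
proof (intro allI impI, elim conjE)
  fix U V assume U: "openin (top_of_set embedded_paths) U" "U \<noteq> {}"
    and V: "openin (top_of_set embedded_paths) V" "V \<noteq> {}"
  obtain a b where ab: "a \<in> U" "b \<in> V" using U(2) V(2) by blast
  moreover have "U \<subseteq> embedded_paths" "V \<subseteq> embedded_paths"
    using U(1) V(1) by (simp_all add: openin_imp_subset)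
  ultimately have "a \<in> embedded_paths" "b \<in> embedded_paths" by auto
  then obtain x x' where "is_path x" "a = embed x" "is_path x'" "b = embed x'"
    by (auto simp: embedded_paths_iff)
  then have x: "is_path x" "embed x \<in> U" and x': "is_path x'" "embed x' \<in> V" using ab by auto
  obtain ea where ea: "0 < ea" "\<forall>z\<in>embedded_paths. dist z (embed x) < ea \<longrightarrow> z \<in> U"
    using U(1) x(2) unfolding openin_euclidean_subtopology_iff by blast
  obtain eb where eb: "0 < eb" "\<forall>z\<in>embedded_paths. dist z (embed x') < eb \<longrightarrow> z \<in> V"
    using V(1) x'(2) unfolding openin_euclidean_subtopology_iff by blast
  obtain n1 where n1: "\<forall>y. is_path y \<longrightarrow> (\<forall>i<n1. y i = x i) \<longrightarrow> dist (embed y) (embed x) < ea"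
    using embed_close_if_long_prefix[OF x(1) ea(1)] by blast
  obtain n2 where n2: "\<forall>y. is_path y \<longrightarrow> (\<forall>i<n2. y i = x' i) \<longrightarrow> dist (embed y) (embed x') < eb"
    using embed_close_if_long_prefix[OF x'(1) eb(1)] by blast
  obtain u u' d where uu': "is_path u" "is_path u'" "\<forall>i<max n1 n2. u i = x i"
      "\<forall>i<max n1 n2. u' i = x' i" "1 \<le> d" "(vershik ^^ d) u = u'"
    by (rule cylinders_joined_by_orbit[OF x(1) x'(1)])
  have "dist (embed u) (embed x) < ea" "dist (embed u') (embed x') < eb"
    using n1 n2 uu'(1-4) by simp_all
  then have "embed u \<in> U" "embed u' \<in> V"
    using ea(2) eb(2) uu'(1,2) by (auto simp: embedded_paths_def)
  moreover have "(embedded_vershik ^^ d) (embed u) = embed u'"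
    using funpow_embedded_vershik_embed[OF uu'(1)] uu'(6) by simp
  ultimately have "embed u' \<in> (embedded_vershik ^^ d) ` U \<inter> V" by (metis IntI image_eqI)
  then show "\<exists>n\<ge>1. (embedded_vershik ^^ n) ` U \<inter> V \<noteq> {}"
    using uu'(5) by blast
qed

definition embedded_bottom_paths :: "real set" where
  "embedded_bottom_paths = embed ` {x. is_path x \<and> bottom_path x}"

lemma embedded_vershik_image_bottom:
  "embedded_vershik ` embedded_bottom_paths = embedded_bottom_paths"
proof
  show "embedded_vershik ` embedded_bottom_paths \<subseteq> embedded_bottom_paths"
  proof
    fix z assume "z \<in> embedded_vershik ` embedded_bottom_paths"
    then obtain y where y: "is_path y" "bottom_path y" "z = embedded_vershik (embed y)"
      by (auto simp: embedded_bottom_paths_def)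
    then have "z = embed (vershik y)" by (simp add: embedded_vershik_embed)
    then show "z \<in> embedded_bottom_paths"
      using is_path_vershik[OF y(1)] bottom_path_vershik[OF y(1,2)]
      by (simp add: embedded_bottom_paths_def)
  qed
  show "embedded_bottom_paths \<subseteq> embedded_vershik ` embedded_bottom_paths"
  proof
    fix z assume "z \<in> embedded_bottom_paths"
    then obtain y where y: "is_path y" "bottom_path y" "z = embed y"
      by (auto simp: embedded_bottom_paths_def)
    then have "z = embedded_vershik (embed (vershik_inv y))"
      using embedded_vershik_embed[OF is_path_vershik_inv] vershik_vershik_inv by simp
    moreover have "embed (vershik_inv y) \<in> embedded_bottom_paths"
      using is_path_vershik_inv[OF y(1)] bottom_path_vershik_inv[OF y(1,2)]
      by (simp add: embedded_bottom_paths_def)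
    ultimately show "z \<in> embedded_vershik ` embedded_bottom_paths" by blast
  qed
qed

lemma embedded_bottom_paths_psubset: "embedded_bottom_paths \<subset> embedded_paths"
proof -
  have top: "is_path (\<lambda>i. 4)" by (simp add: is_path_def)
  have "embed (\<lambda>i. 4) \<notin> embedded_bottom_paths"
  proof
    assume "embed (\<lambda>i. 4) \<in> embedded_bottom_paths"
    then obtain y where y: "is_path y" "bottom_path y" "embed (\<lambda>i. 4) = embed y"
      by (auto simp: embedded_bottom_paths_def)
    then have "(\<lambda>i. 4) = y" by (intro embed_inj[OF top])
    then have "bottom_path (\<lambda>i::nat. 4::nat)" using y(2) by simp
    then show False by (simp add: bottom_path_def)
  qed
  moreover have "embed (\<lambda>i. 4) \<in> embedded_paths" using top by (auto simp: embedded_paths_iff)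
  ultimately show ?thesis by (auto simp: embedded_bottom_paths_def embedded_paths_def)
qed

lemma not_dyn_minimal_embedded_vershik: "\<not> dyn_minimal embedded_paths embedded_vershik"
proof -
  have "embed (\<lambda>i. 0) \<in> embedded_bottom_paths"
    using is_path_zeros by (simp add: embedded_bottom_paths_def bottom_path_def)
  then have "embedded_bottom_paths \<noteq> {}" by blast
  moreover have "closedin (top_of_set embedded_paths) embedded_bottom_paths"
    using embedded_bottom_paths_psubset closed_embed_image[OF _ prefix_closed_bottom_paths]
    by (intro closed_subset) (auto simp: embedded_bottom_paths_def)
  ultimately show ?thesis
    unfolding dyn_minimal_def using embedded_bottom_paths_psubset embedded_vershik_image_bottom
    by (intro notI exI[of _ embedded_bottom_paths]) blast
qed

lemma no_periodic_point_embedded_vershik: "\<not> periodic_point embedded_paths embedded_vershik z"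
proof
  assume "periodic_point embedded_paths embedded_vershik z"
  then obtain n x where n: "1 \<le> n" "(embedded_vershik ^^ n) z = z" and x: "is_path x" "z = embed x"
    by (auto simp: periodic_point_def embedded_paths_iff)
  then have "embed ((vershik ^^ n) x) = embed x" using funpow_embedded_vershik_embed by simp
  then have "(vershik ^^ n) x = x" using embed_inj[OF is_path_funpow_vershik[OF x(1)] x(1)] by simp
  then show False using vershik_aperiodic[OF x(1)] n(1) by simp
qed

theorem theoremC:
  shows "\<exists>(X::real set) T. cantor_set X \<and> is_homeo_of X T \<and> dyn_transitive X T
     \<and> \<not> dyn_minimal X T \<and> (\<forall>x. \<not> periodic_point X T x)
     \<and> (\<exists>(K::real set) f. cantor_set K \<and> is_homeo_of K f
          \<and> (\<forall>x\<in>K. rel_deriv_is f K x 0) \<and> conjugate X T K f)"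
proof -
  let ?K = embedded_paths and ?f = embedded_vershik
  have "cantor_set ?K" "is_homeo_of ?K ?f"
    using cantor_set_embedded_paths homeomorphism_embedded_vershik by (simp_all add: is_homeo_of_def)
  moreover have "\<forall>x\<in>?K. rel_deriv_is ?f ?K x 0"
    using embedded_vershik_diff_quotient_tendsto_0 by (simp add: rel_deriv_is_def)
  moreover have "conjugate ?K ?f ?K ?f"
    unfolding conjugate_def using homeomorphism_ident[of ?K] by auto
  ultimately show ?thesis
    using dyn_transitive_embedded_vershik not_dyn_minimal_embedded_vershik
      no_periodic_point_embedded_vershik by blast
qed

end
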